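(* Let $\mathcal{G}$ and $\mathcal{H}$ be groupoids (not necessarily finite) and let $\phi,\psi\colon\widetilde{S}(\mathcal{G})\to\widetilde{S}(\mathcal{H})$ be morphisms of quasi-schemoids. Then there exists a homotopy $L\colon\phi\Rightarrow\psi$ if and only if $\psi(j)^{-1}\phi(i)=\psi(l)^{-1}\phi(k)$ for all morphisms $(j,i)$ and $(l,k)$ of $\widetilde{\mathcal{G}}$ with $j^{-1}i=l^{-1}k$.
   Context: For a groupoid $\mathcal{H}$, the quasi-schemoid $\widetilde{S}(\mathcal{H})=(\widetilde{\mathcal{H}},S)$ has $ob(\widetilde{\mathcal{H}})=mor(\mathcal{H})$, $\mathrm{Hom}_{\widetilde{\mathcal{H}}}(g,h)=\{(h,g)\}$ if $t(h)=t(g)$ and empty otherwise (composition $(k,h)\circ(h,g)=(k,g)$), and partition $S=\{\mathcal{G}_f\}_{f\in mor(\mathcal{H})}$ with $\mathcal{G}_f=\{(k,l)\mid k^{-1}l=f\}$. Here $\phi(i)$, $\psi(j)$ denote the images of objects of $\widetilde{\mathcal{G}}$, i.e. morphisms of $\mathcal{H}$, and products are compositions in $\mathcal{H}$. A morphism of quasi-schemoids is a functor sending each block of the source partition into some block of the target partition. Product: $(\mathcal{C},S)\times(\mathcal{E},S')=(\mathcal{C}\times\mathcal{E},\{\sigma\times\tau\})$. $[1]$ has objects $0,1$ and one non-identity morphism $0\to1$; $I=([1],\{\{f\}\}_f)$. A homotopy $L\colon\phi\Rightarrow\psi$ is a morphism of quasi-schemoids $L\colon\widetilde{S}(\mathcal{G})\times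 I\to\widetilde{S}(\mathcal{H})$ with $L\circ\varepsilon_0=\phi$, $L\circ\varepsilon_1=\psi$, where $\varepsilon_i(a)=(a,i)$, $\varepsilon_i(f)=(f,1_i)$. *)

theory Defs
  imports Main
begin

(* A small category given by its object set, arrow set, domain, codomain,
   composition (cmp C g f = g o f, defined when ccod C f = cdom C g) and identities. *)
record ('o,'a) cat =
  obj  :: "'o set"
  arr  :: "'a set"
  cdom :: "'a \<Rightarrow> 'o"
  ccod :: "'a \<Rightarrow> 'o"
  cmp  :: "'a \<Rightarrow> 'a \<Rightarrow> 'a"
  idn  :: "'o \<Rightarrow> 'a"

definition is_category :: "('o,'a) cat \<Rightarrow> bool" where
  "is_category C \<longleftrightarrow>
     (\<forall>f\<in>arr C. cdom C f \<in> obj C \<and> ccod C f \<in> obj C) \<and>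
     (\<forall>x\<in>obj C. idn C x \<in> arr C \<and> cdom C (idn C x) = x \<and> ccod C (idn C x) = x) \<and>
     (\<forall>f\<in>arr C. \<forall>g\<in>arr C. ccod C f = cdom C g \<longrightarrow>
         cmp C g f \<in> arr C \<and> cdom C (cmp C g f) = cdom C f \<and> ccod C (cmp C g f) = ccod C g) \<and>
     (\<forall>f\<in>arr C. cmp C f (idn C (cdom C f)) = f \<and> cmp C (idn C (ccod C f)) f = f) \<and>
     (\<forall>f\<in>arr C. \<forall>g\<in>arr C. \<forall>h\<in>arr C. ccod C f = cdom C g \<longrightarrow> ccod C g = cdom C h \<longrightarrow>
         cmp C h (cmp C g f) = cmp C (cmp C h g) f)"

definition is_inverse :: "('o,'a) cat \<Rightarrow> 'a \<Rightarrow> 'a \<Rightarrow> bool" where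
  "is_inverse C f g \<longleftrightarrow> g \<in> arr C \<and> cdom C g = ccod C f \<and> ccod C g = cdom C f \<and>
     cmp C g f = idn C (cdom C f) \<and> cmp C f g = idn C (ccod C f)"

definition is_groupoid :: "('o,'a) cat \<Rightarrow> bool" where
  "is_groupoid C \<longleftrightarrow> is_category C \<and> (\<forall>f\<in>arr C. \<exists>g. is_inverse C f g)"

definition ginv :: "('o,'a) cat \<Rightarrow> 'a \<Rightarrow> 'a" where
  "ginv C f = (THE g. is_inverse C f g)"

definition is_functor :: "('o,'a) cat \<Rightarrow> ('p,'b) cat \<Rightarrow> ('o \<Rightarrow> 'p) \<Rightarrow> ('a \<Rightarrow> 'b) \<Rightarrow> bool" where
  "is_functor C E Fo Fa \<longleftrightarrow>
     (\<forall>x\<in>obj C. Fo x \<in> obj E) \<and>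
     (\<forall>f\<in>arr C. Fa f \<in> arr E \<and> cdom E (Fa f) = Fo (cdom C f) \<and> ccod E (Fa f) = Fo (ccod C f)) \<and>
     (\<forall>f\<in>arr C. \<forall>g\<in>arr C. ccod C f = cdom C g \<longrightarrow> Fa (cmp C g f) = cmp E (Fa g) (Fa f)) \<and>
     (\<forall>x\<in>obj C. Fa (idn C x) = idn E (Fo x))"

definition qs_morphism ::
  "('o,'a) cat \<Rightarrow> 'a set set \<Rightarrow> ('p,'b) cat \<Rightarrow> 'b set set \<Rightarrow> ('o \<Rightarrow> 'p) \<Rightarrow> ('a \<Rightarrow> 'b) \<Rightarrow> bool" where
  "qs_morphism C S E S' Fo Fa \<longleftrightarrow> is_functor C E Fo Fa \<and> (\<forall>\<sigma>\<in>S. \<exists>\<tau>\<in>S'. Fa ` \<sigma> \<subseteq> \<tau>)"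

(* The category H~ : objects = arrows of H, Hom(g,h) = {(h,g)} if t(h) = t(g) *)
definition Stilde_cat :: "('o,'a) cat \<Rightarrow> ('a, 'a \<times> 'a) cat" where
  "Stilde_cat H = \<lparr> obj = arr H,
                    arr = {(h,g). h \<in> arr H \<and> g \<in> arr H \<and> ccod H h = ccod H g},
                    cdom = snd, ccod = fst,
                    cmp = (\<lambda>x y. (fst x, snd y)),
                    idn = (\<lambda>g. (g,g)) \<rparr>"

definition Stilde_part :: "('o,'a) cat \<Rightarrow> ('a \<times> 'a) set set" where
  "Stilde_part H = {{(k,l) \<in> arr (Stilde_cat H). cmp H (ginv H k) l = f} | f. f \<in> arr H}"

definition prod_cat :: "('o,'a) cat \<Rightarrow> ('p,'b) cat \<Rightarrow> ('o \<times> 'p, 'a \<times> 'b) cat" where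
  "prod_cat C E = \<lparr> obj = obj C \<times> obj E, arr = arr C \<times> arr E,
                    cdom = (\<lambda>(f,g). (cdom C f, cdom E g)),
                    ccod = (\<lambda>(f,g). (ccod C f, ccod E g)),
                    cmp = (\<lambda>(f1,g1) (f2,g2). (cmp C f1 f2, cmp E g1 g2)),
                    idn = (\<lambda>(x,y). (idn C x, idn E y)) \<rparr>"

definition prod_part :: "'a set set \<Rightarrow> 'b set set \<Rightarrow> ('a \<times> 'b) set set" where
  "prod_part S S' = {\<sigma> \<times> \<tau> | \<sigma> \<tau>. \<sigma> \<in> S \<and> \<tau> \<in> S'}"

(* [1]: objects 0 = False, 1 = True; arrows (a,b) : a -> b with a <= b *)
definition interval_cat :: "(bool, bool \<times> bool) cat" where
  "interval_cat = \<lparr> obj = UNIV, arr = {(False,False),(False,True),(True,True)},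
                    cdom = fst, ccod = snd,
                    cmp = (\<lambda>g f. (fst f, snd g)),
                    idn = (\<lambda>x. (x,x)) \<rparr>"

definition interval_part :: "(bool \<times> bool) set set" where
  "interval_part = {{f} | f. f \<in> arr interval_cat}"

definition eps_obj :: "bool \<Rightarrow> 'a \<Rightarrow> 'a \<times> bool" where
  "eps_obj i a = (a, i)"

definition eps_arr :: "bool \<Rightarrow> 'm \<Rightarrow> 'm \<times> (bool \<times> bool)" where
  "eps_arr i f = (f, idn interval_cat i)"

definition is_homotopy ::
  "('o,'a) cat \<Rightarrow> ('p,'b) cat \<Rightarrow> ('a \<Rightarrow> 'b) \<Rightarrow> ('a \<times> 'a \<Rightarrow> 'b \<times> 'b) \<Rightarrow>
   ('a \<Rightarrow> 'b) \<Rightarrow> ('a \<times> 'a \<Rightarrow> 'b \<times> 'b) \<Rightarrow>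
   ('a \<times> bool \<Rightarrow> 'b) \<Rightarrow> (('a \<times> 'a) \<times> (bool \<times> bool) \<Rightarrow> 'b \<times> 'b) \<Rightarrow> bool" where
  "is_homotopy G H \<phi>o \<phi>a \<psi>o \<psi>a Lo La \<longleftrightarrow>
     qs_morphism (prod_cat (Stilde_cat G) interval_cat) (prod_part (Stilde_part G) interval_part)
                 (Stilde_cat H) (Stilde_part H) Lo La \<and>
     (\<forall>a\<in>obj (Stilde_cat G). Lo (eps_obj False a) = \<phi>o a \<and> Lo (eps_obj True a) = \<psi>o a) \<and>
     (\<forall>f\<in>arr (Stilde_cat G). La (eps_arr False f) = \<phi>a f \<and> La (eps_arr True f) = \<psi>a f)"

end

theory Submission
  imports Defs
begin

text \<open>Every functor into \<open>S~(H)\<close> is determined by its object map, since \<open>S~(H)\<close> has at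
  most one arrow between two objects. Hence a homotopy \<open>L\<close> from \<open>\<phi>\<close> to \<open>\<psi>\<close> is forced to be
  \<open>\<phi>\<close> on \<open>S~(G) \<times> 0\<close> and \<open>\<psi>\<close> on \<open>S~(G) \<times> 1\<close>, and on \<open>S~(G) \<times> (0 \<rightarrow> 1)\<close> it is the mixed map
  \<open>(j,i) \<mapsto> (\<psi>(j), \<phi>(i))\<close>. Conversely these formulas always define a functor as soon as
  \<open>\<psi>(j)\<close> and \<open>\<phi>(i)\<close> have a common target, so the only question is whether the mixed map sends
  each block \<open>\<G>\<^sub>f\<close> into a block of \<open>S~(H)\<close>, i.e. whether \<open>\<psi>(j)\<^sup>-\<^sup>1\<phi>(i)\<close> depends only on
  \<open>j\<^sup>-\<^sup>1i\<close>.\<close>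

lemma image_Times_singleton: "F ` (A \<times> {x}) = (\<lambda>a. F (a, x)) ` A"
  by auto

lemma category_arr_objs:
  assumes "is_category C" "f \<in> arr C"
  shows "cdom C f \<in> obj C" "ccod C f \<in> obj C"
  using assms unfolding is_category_def by blast+

lemma category_idn:
  assumes "is_category C" "x \<in> obj C"
  shows "idn C x \<in> arr C" "cdom C (idn C x) = x" "ccod C (idn C x) = x"
  using assms unfolding is_category_def by blast+

lemma category_cmp:
  assumes "is_category C" "f \<in> arr C" "g \<in> arr C" "ccod C f = cdom C g"
  shows "cmp C g f \<in> arr C" "cdom C (cmp C g f) = cdom C f" "ccod C (cmp C g f) = ccod C g"
  using assms unfolding is_category_def by blast+

lemma category_unit:
  assumes "is_category C" "f \<in> arr C"
  shows "cmp C f (idn C (cdom C f)) = f" "cmp C (idn C (ccod C f)) f = f"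
  using assms unfolding is_category_def by blast+

lemma category_assoc:
  assumes "is_category C" "f \<in> arr C" "g \<in> arr C" "h \<in> arr C"
    and "ccod C f = cdom C g" "ccod C g = cdom C h"
  shows "cmp C h (cmp C g f) = cmp C (cmp C h g) f"
  using assms unfolding is_category_def by blast

lemma inverse_unique:
  assumes C: "is_category C" and f: "f \<in> arr C"
    and "is_inverse C f g" "is_inverse C f g'"
  shows "g = g'"
proof -
  have g: "g \<in> arr C" "cdom C g = ccod C f" "ccod C g = cdom C f" "cmp C g f = idn C (cdom C f)"
    and g': "g' \<in> arr C" "cdom C g' = ccod C f" "ccod C g' = cdom C f" "cmp C f g' = idn C (ccod C f)"
    using assms(3,4) unfolding is_inverse_def by auto
  have "g = cmp C g (idn C (cdom C g))" using category_unit[OF C g(1)] by simp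
  also have "\<dots> = cmp C g (cmp C f g')" using g g' by simp
  also have "\<dots> = cmp C (cmp C g f) g'" using category_assoc[OF C g'(1) f g(1)] g g' by simp
  also have "\<dots> = cmp C (idn C (ccod C g')) g'" using g g' by simp
  also have "\<dots> = g'" using category_unit[OF C g'(1)] by simp
  finally show ?thesis .
qed

lemma ginv_eqI:
  assumes "is_category C" "f \<in> arr C" "is_inverse C f g"
  shows "ginv C f = g"
  unfolding ginv_def using assms(3)
  by (rule the_equality) (use inverse_unique[OF assms(1,2)] assms(3) in blast)

lemma ginv_inverse:
  assumes "is_groupoid C" "f \<in> arr C"
  shows "is_inverse C f (ginv C f)"
proof -
  obtain g where g: "is_inverse C f g" using assms unfolding is_groupoid_def by blast
  have "is_category C" using assms(1) unfolding is_groupoid_def by blast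
  with g show ?thesis using ginv_eqI[OF _ assms(2)] by simp
qed

lemma ginv_idn:
  assumes C: "is_category C" and x: "x \<in> obj C"
  shows "ginv C (idn C x) = idn C x"
proof (rule ginv_eqI[OF C])
  show "idn C x \<in> arr C" using category_idn[OF C x] by simp
  then show "is_inverse C (idn C x) (idn C x)"
    using category_idn[OF C x] category_unit[OF C] unfolding is_inverse_def by metis
qed

lemma cmp_ginv_arr:
  assumes "is_groupoid C" "k \<in> arr C" "l \<in> arr C" "ccod C k = ccod C l"
  shows "cmp C (ginv C k) l \<in> arr C"
proof -
  have "is_category C" using assms(1) unfolding is_groupoid_def by blast
  moreover have "ginv C k \<in> arr C" "cdom C (ginv C k) = ccod C k"
    using ginv_inverse[OF assms(1,2)] unfolding is_inverse_def by auto
  ultimately show ?thesis using category_cmp assms by metis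
qed

lemma is_category_Stilde_cat: "is_category (Stilde_cat H)"
  unfolding is_category_def by (auto simp: Stilde_cat_def)

lemma is_category_interval_cat: "is_category interval_cat"
  unfolding is_category_def by (auto simp: interval_cat_def)

lemma is_category_prod_cat:
  assumes "is_category C" "is_category E"
  shows "is_category (prod_cat C E)"
  using assms unfolding is_category_def by (auto simp: prod_cat_def)

lemma functor_into_Stilde_cat:
  assumes "is_functor C (Stilde_cat H) Fo Fa" "f \<in> arr C"
  shows "Fa f = (Fo (ccod C f), Fo (cdom C f))"
    and "(Fo (ccod C f), Fo (cdom C f)) \<in> arr (Stilde_cat H)"
  using assms unfolding is_functor_def by (auto simp: Stilde_cat_def prod_eq_iff)

lemma is_functor_into_Stilde_cat:
  assumes "is_category C" "\<And>x. x \<in> obj C \<Longrightarrow> Fo x \<in> arr H"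
    and "\<And>f. f \<in> arr C \<Longrightarrow> ccod H (Fo (ccod C f)) = ccod H (Fo (cdom C f))"
  shows "is_functor C (Stilde_cat H) Fo (\<lambda>f. (Fo (ccod C f), Fo (cdom C f)))"
  using assms unfolding is_functor_def is_category_def by (auto simp: Stilde_cat_def)

definition Stilde_block :: "('o,'a) cat \<Rightarrow> 'a \<Rightarrow> ('a \<times> 'a) set" where
  "Stilde_block H f = {(k,l) \<in> arr (Stilde_cat H). cmp H (ginv H k) l = f}"

lemma Stilde_part_eq: "Stilde_part H = Stilde_block H ` arr H"
  unfolding Stilde_part_def Stilde_block_def by blast

lemma Stilde_part_subset_arr: "\<sigma> \<in> Stilde_part H \<Longrightarrow> \<sigma> \<subseteq> arr (Stilde_cat H)"
  unfolding Stilde_part_eq Stilde_block_def by blast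

lemma ex_Stilde_block_superset_iff:
  assumes "is_groupoid H" "A \<subseteq> arr (Stilde_cat H)" "(k,l) \<in> A"
  shows "(\<exists>\<tau>\<in>Stilde_part H. A \<subseteq> \<tau>) \<longleftrightarrow> A \<subseteq> Stilde_block H (cmp H (ginv H k) l)"
proof
  assume "\<exists>\<tau>\<in>Stilde_part H. A \<subseteq> \<tau>"
  then obtain f where "A \<subseteq> Stilde_block H f" unfolding Stilde_part_eq by blast
  moreover have "f = cmp H (ginv H k) l"
    using calculation assms(3) unfolding Stilde_block_def by auto
  ultimately show "A \<subseteq> Stilde_block H (cmp H (ginv H k) l)" by simp
next
  have "cmp H (ginv H k) l \<in> arr H"
    using assms by (intro cmp_ginv_arr) (auto simp: Stilde_cat_def)
  then show "A \<subseteq> Stilde_block H (cmp H (ginv H k) l) \<Longrightarrow> \<exists>\<tau>\<in>Stilde_part H. A \<subseteq> \<tau>"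
    unfolding Stilde_part_eq by blast
qed

lemma Stilde_block_idn:
  assumes G: "is_category G" and f: "f \<in> arr G"
  shows "(idn G (ccod G f), f) \<in> Stilde_block G f"
proof -
  have x: "ccod G f \<in> obj G" using category_arr_objs[OF G f] by simp
  show ?thesis
    using category_idn[OF G x] category_unit[OF G f] ginv_idn[OF G x] f
    unfolding Stilde_block_def by (simp add: Stilde_cat_def)
qed

definition homotopy_condition ::
  "('o,'a) cat \<Rightarrow> ('p,'b) cat \<Rightarrow> ('a \<Rightarrow> 'b) \<Rightarrow> ('a \<Rightarrow> 'b) \<Rightarrow> bool" where
  "homotopy_condition G H \<phi>o \<psi>o \<longleftrightarrow>
     (\<forall>j i l k. (j,i) \<in> arr (Stilde_cat G) \<longrightarrow> (l,k) \<in> arr (Stilde_cat G) \<longrightarrow>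
        cmp G (ginv G j) i = cmp G (ginv G l) k \<longrightarrow>
          ccod H (\<psi>o j) = ccod H (\<phi>o i) \<and> ccod H (\<psi>o l) = ccod H (\<phi>o k) \<and>
          cmp H (ginv H (\<psi>o j)) (\<phi>o i) = cmp H (ginv H (\<psi>o l)) (\<phi>o k))"

lemma mixed_map_preserves_blocks_if_homotopy_condition:
  assumes G: "is_category G" and H: "is_groupoid H"
    and \<phi>: "is_functor (Stilde_cat G) (Stilde_cat H) \<phi>o \<phi>a"
    and \<psi>: "is_functor (Stilde_cat G) (Stilde_cat H) \<psi>o \<psi>a"
    and cond: "homotopy_condition G H \<phi>o \<psi>o" and "\<sigma> \<in> Stilde_part G"
  shows "\<exists>\<tau>\<in>Stilde_part H. (\<lambda>(j,i). (\<psi>o j, \<phi>o i)) ` \<sigma> \<subseteq> \<tau>"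
    (is "\<exists>\<tau>\<in>_. ?mix ` \<sigma> \<subseteq> \<tau>")
proof -
  obtain f where f: "f \<in> arr G" and \<sigma>: "\<sigma> = Stilde_block G f"
    using \<open>\<sigma> \<in> Stilde_part G\<close> unfolding Stilde_part_eq by blast
  define e where "e = idn G (ccod G f)"
  have e: "(e, f) \<in> \<sigma>" using Stilde_block_idn[OF G f] unfolding \<sigma> e_def .
  have \<sigma>_arr: "(h,g) \<in> arr (Stilde_cat G)" and \<sigma>_label: "cmp G (ginv G h) g = cmp G (ginv G e) f"
    if "(h,g) \<in> \<sigma>" for h g
    using that e unfolding \<sigma> Stilde_block_def by auto
  have mix_arr: "(\<psi>o h, \<phi>o g) \<in> arr (Stilde_cat H)" if "(h,g) \<in> arr (Stilde_cat G)" for h g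
    using cond that functor_into_Stilde_cat(2)[OF \<phi> that] functor_into_Stilde_cat(2)[OF \<psi> that]
    unfolding homotopy_condition_def by (auto simp: Stilde_cat_def)
  have "?mix ` \<sigma> \<subseteq> Stilde_block H (cmp H (ginv H (\<psi>o e)) (\<phi>o f))"
  proof clarify
    fix h g assume hg: "(h,g) \<in> \<sigma>"
    have "cmp H (ginv H (\<psi>o h)) (\<phi>o g) = cmp H (ginv H (\<psi>o e)) (\<phi>o f)"
      using cond \<sigma>_arr[OF hg] \<sigma>_arr[OF e] \<sigma>_label[OF hg] unfolding homotopy_condition_def by blast
    then show "(\<psi>o h, \<phi>o g) \<in> Stilde_block H (cmp H (ginv H (\<psi>o e)) (\<phi>o f))"
      using mix_arr[OF \<sigma>_arr[OF hg]] unfolding Stilde_block_def by simp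
  qed
  moreover have "?mix ` \<sigma> \<subseteq> arr (Stilde_cat H)" using mix_arr \<sigma>_arr by auto
  moreover have "(\<psi>o e, \<phi>o f) \<in> ?mix ` \<sigma>" using e by force
  ultimately show ?thesis using ex_Stilde_block_superset_iff[OF H] by simp
qed

lemma homotopy_condition_if_mixed_map_preserves_blocks:
  assumes G: "is_groupoid G"
    and blocks: "\<forall>\<sigma>\<in>Stilde_part G. \<exists>\<tau>\<in>Stilde_part H. (\<lambda>(j,i). (\<psi>o j, \<phi>o i)) ` \<sigma> \<subseteq> \<tau>"
  shows "homotopy_condition G H \<phi>o \<psi>o"
  unfolding homotopy_condition_def
proof (intro allI impI)
  fix j i l k
  assume ji: "(j,i) \<in> arr (Stilde_cat G)" and lk: "(l,k) \<in> arr (Stilde_cat G)"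
    and eq: "cmp G (ginv G j) i = cmp G (ginv G l) k"
  let ?\<sigma> = "Stilde_block G (cmp G (ginv G j) i)"
  have "cmp G (ginv G j) i \<in> arr G"
    using ji by (intro cmp_ginv_arr[OF G]) (auto simp: Stilde_cat_def)
  then obtain f' where f': "(\<lambda>(j,i). (\<psi>o j, \<phi>o i)) ` ?\<sigma> \<subseteq> Stilde_block H f'"
    using blocks unfolding Stilde_part_eq by blast
  have "(j,i) \<in> ?\<sigma>" "(l,k) \<in> ?\<sigma>"
    using ji lk eq unfolding Stilde_block_def by auto
  then have "(\<psi>o j, \<phi>o i) \<in> Stilde_block H f'" "(\<psi>o l, \<phi>o k) \<in> Stilde_block H f'"
    using f' by blast+
  then show "ccod H (\<psi>o j) = ccod H (\<phi>o i) \<and> ccod H (\<psi>o l) = ccod H (\<phi>o k) \<and>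
      cmp H (ginv H (\<psi>o j)) (\<phi>o i) = cmp H (ginv H (\<psi>o l)) (\<phi>o k)"
    by (simp add: Stilde_block_def Stilde_cat_def)
qed

lemma homotopy_mixed_map_preserves_blocks:
  assumes "is_homotopy G H \<phi>o \<phi>a \<psi>o \<psi>a Lo La" "\<sigma> \<in> Stilde_part G"
  shows "\<exists>\<tau>\<in>Stilde_part H. (\<lambda>(j,i). (\<psi>o j, \<phi>o i)) ` \<sigma> \<subseteq> \<tau>"
proof -
  have L: "is_functor (prod_cat (Stilde_cat G) interval_cat) (Stilde_cat H) Lo La"
    and blocks: "\<forall>\<Sigma>\<in>prod_part (Stilde_part G) interval_part. \<exists>\<tau>\<in>Stilde_part H. La ` \<Sigma> \<subseteq> \<tau>"
    using assms(1) unfolding is_homotopy_def qs_morphism_def by blast+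
  have ends: "Lo (a, False) = \<phi>o a" "Lo (a, True) = \<psi>o a" if "a \<in> arr G" for a
    using assms(1) that unfolding is_homotopy_def eps_obj_def by (simp_all add: Stilde_cat_def)
  have mixed: "La ((j,i),(False,True)) = (\<psi>o j, \<phi>o i)" if "(j,i) \<in> \<sigma>" for j i
  proof -
    have ji: "(j,i) \<in> arr (Stilde_cat G)" using Stilde_part_subset_arr assms(2) that by blast
    then have "((j,i),(False,True)) \<in> arr (prod_cat (Stilde_cat G) interval_cat)"
      by (simp add: prod_cat_def interval_cat_def)
    from functor_into_Stilde_cat(1)[OF L this] show ?thesis
      using ends ji by (simp add: prod_cat_def Stilde_cat_def interval_cat_def)
  qed
  have "La ` (\<sigma> \<times> {(False,True)}) = (\<lambda>(j,i). (\<psi>o j, \<phi>o i)) ` \<sigma>"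
    unfolding image_Times_singleton using mixed by (intro image_cong) auto
  moreover have "\<sigma> \<times> {(False,True)} \<in> prod_part (Stilde_part G) interval_part"
    using assms(2) unfolding prod_part_def interval_part_def interval_cat_def by auto
  ultimately show ?thesis using blocks by metis
qed

lemma is_functor_interpolating:
  assumes \<phi>: "is_functor (Stilde_cat G) (Stilde_cat H) \<phi>o \<phi>a"
    and \<psi>: "is_functor (Stilde_cat G) (Stilde_cat H) \<psi>o \<psi>a"
    and mixed_cod: "\<And>h g. (h,g) \<in> arr (Stilde_cat G) \<Longrightarrow> ccod H (\<psi>o h) = ccod H (\<phi>o g)"
  shows "is_functor (prod_cat (Stilde_cat G) interval_cat) (Stilde_cat H)
           (\<lambda>(a,t). if t then \<psi>o a else \<phi>o a)
           (\<lambda>((h,g),(s,t)). ((if t then \<psi>o h else \<phi>o h), (if s then \<psi>o g else \<phi>o g)))"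
    (is "is_functor ?P _ ?Lo ?La")
proof -
  have \<phi>_arr: "(\<phi>o h, \<phi>o g) \<in> arr (Stilde_cat H)" and \<psi>_arr: "(\<psi>o h, \<psi>o g) \<in> arr (Stilde_cat H)"
    if "(h,g) \<in> arr (Stilde_cat G)" for h g
    using functor_into_Stilde_cat(2)[OF \<phi> that] functor_into_Stilde_cat(2)[OF \<psi> that]
    by (simp_all add: Stilde_cat_def)
  have "?La = (\<lambda>f. (?Lo (ccod ?P f), ?Lo (cdom ?P f)))"
    by (rule ext) (simp add: prod_cat_def Stilde_cat_def interval_cat_def split: prod.splits)
  moreover have "is_functor ?P (Stilde_cat H) ?Lo (\<lambda>f. (?Lo (ccod ?P f), ?Lo (cdom ?P f)))"
  proof (rule is_functor_into_Stilde_cat)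
    show "is_category ?P"
      by (intro is_category_prod_cat is_category_Stilde_cat is_category_interval_cat)
    show "?Lo x \<in> arr H" if "x \<in> obj ?P" for x
      using that \<phi>_arr \<psi>_arr by (auto simp: prod_cat_def Stilde_cat_def)
    show "ccod H (?Lo (ccod ?P f)) = ccod H (?Lo (cdom ?P f))" if "f \<in> arr ?P" for f
    proof -
      obtain h g s t where f: "f = ((h,g),(s,t))" by (metis prod.collapse)
      have hg: "(h,g) \<in> arr (Stilde_cat G)" and st: "(s,t) \<in> arr interval_cat"
        using that unfolding f by (simp_all add: prod_cat_def)
      have "ccod H (\<phi>o h) = ccod H (\<phi>o g)" "ccod H (\<psi>o h) = ccod H (\<psi>o g)"
        using \<phi>_arr[OF hg] \<psi>_arr[OF hg] by (simp_all add: Stilde_cat_def)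
      with st mixed_cod[OF hg] show ?thesis
        unfolding f by (auto simp: prod_cat_def Stilde_cat_def interval_cat_def)
    qed
  qed
  ultimately show ?thesis by simp
qed

lemma is_homotopy_interpolating:
  assumes G: "is_groupoid G" and H: "is_groupoid H"
    and \<phi>: "qs_morphism (Stilde_cat G) (Stilde_part G) (Stilde_cat H) (Stilde_part H) \<phi>o \<phi>a"
    and \<psi>: "qs_morphism (Stilde_cat G) (Stilde_part G) (Stilde_cat H) (Stilde_part H) \<psi>o \<psi>a"
    and cond: "homotopy_condition G H \<phi>o \<psi>o"
  shows "is_homotopy G H \<phi>o \<phi>a \<psi>o \<psi>a (\<lambda>(a,t). if t then \<psi>o a else \<phi>o a)
           (\<lambda>((h,g),(s,t)). ((if t then \<psi>o h else \<phi>o h), (if s then \<psi>o g else \<phi>o g)))"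
    (is "is_homotopy _ _ _ _ _ _ ?Lo ?La")
proof -
  have \<phi>f: "is_functor (Stilde_cat G) (Stilde_cat H) \<phi>o \<phi>a"
    and \<psi>f: "is_functor (Stilde_cat G) (Stilde_cat H) \<psi>o \<psi>a"
    using \<phi> \<psi> unfolding qs_morphism_def by blast+
  have \<phi>_arr: "\<phi>a (h,g) = (\<phi>o h, \<phi>o g)" and \<psi>_arr: "\<psi>a (h,g) = (\<psi>o h, \<psi>o g)"
    if "(h,g) \<in> arr (Stilde_cat G)" for h g
    using functor_into_Stilde_cat(1)[OF \<phi>f that] functor_into_Stilde_cat(1)[OF \<psi>f that]
    by (simp_all add: Stilde_cat_def)
  have "ccod H (\<psi>o h) = ccod H (\<phi>o g)" if "(h,g) \<in> arr (Stilde_cat G)" for h g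
    using cond that unfolding homotopy_condition_def by blast
  note L_functor = is_functor_interpolating[OF \<phi>f \<psi>f this]
  have catG: "is_category G" using G unfolding is_groupoid_def by blast
  note mixed_blocks = mixed_map_preserves_blocks_if_homotopy_condition[OF catG H \<phi>f \<psi>f cond]
  have blocks: "\<exists>\<tau>\<in>Stilde_part H. ?La ` (\<sigma> \<times> {e}) \<subseteq> \<tau>"
    if \<sigma>: "\<sigma> \<in> Stilde_part G" and e: "e \<in> arr interval_cat" for \<sigma> e
  proof -
    have \<sigma>_arr: "\<sigma> \<subseteq> arr (Stilde_cat G)" using Stilde_part_subset_arr \<sigma> by blast
    from e consider "e = (False,False)" | "e = (False,True)" | "e = (True,True)"
      by (auto simp: interval_cat_def)
    then show ?thesis
    proof cases
      case 1
      then have "?La ` (\<sigma> \<times> {e}) = \<phi>a ` \<sigma>"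
        unfolding image_Times_singleton using \<sigma>_arr \<phi>_arr by (intro image_cong) auto
      then show ?thesis using \<phi> \<sigma> unfolding qs_morphism_def by simp
    next
      case 2
      then have "?La ` (\<sigma> \<times> {e}) = (\<lambda>(j,i). (\<psi>o j, \<phi>o i)) ` \<sigma>"
        unfolding image_Times_singleton by (intro image_cong) auto
      then show ?thesis using mixed_blocks[OF \<sigma>] by simp
    next
      case 3
      then have "?La ` (\<sigma> \<times> {e}) = \<psi>a ` \<sigma>"
        unfolding image_Times_singleton using \<sigma>_arr \<psi>_arr by (intro image_cong) auto
      then show ?thesis using \<psi> \<sigma> unfolding qs_morphism_def by simp
    qed
  qed
  have ends: "?La (eps_arr False f) = \<phi>a f" "?La (eps_arr True f) = \<psi>a f"
    if "f \<in> arr (Stilde_cat G)" for f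
    using that \<phi>_arr \<psi>_arr by (auto simp: eps_arr_def interval_cat_def split: prod.splits)
  have "\<forall>\<Sigma>\<in>prod_part (Stilde_part G) interval_part. \<exists>\<tau>\<in>Stilde_part H. ?La ` \<Sigma> \<subseteq> \<tau>"
    using blocks unfolding prod_part_def interval_part_def by blast
  with L_functor ends show ?thesis
    unfolding is_homotopy_def qs_morphism_def by (simp add: eps_obj_def)
qed

theorem lemma4p11:
  fixes G :: "('o,'a) cat" and H :: "('p,'b) cat"
    and \<phi>o \<psi>o :: "'a \<Rightarrow> 'b" and \<phi>a \<psi>a :: "'a \<times> 'a \<Rightarrow> 'b \<times> 'b"
  assumes "is_groupoid G" and "is_groupoid H"
    and "qs_morphism (Stilde_cat G) (Stilde_part G) (Stilde_cat H) (Stilde_part H) \<phi>o \<phi>a"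
    and "qs_morphism (Stilde_cat G) (Stilde_part G) (Stilde_cat H) (Stilde_part H) \<psi>o \<psi>a"
  shows "(\<exists>Lo La. is_homotopy G H \<phi>o \<phi>a \<psi>o \<psi>a Lo La) \<longleftrightarrow>
         (\<forall>j i l k. (j,i) \<in> arr (Stilde_cat G) \<longrightarrow> (l,k) \<in> arr (Stilde_cat G) \<longrightarrow>
            cmp G (ginv G j) i = cmp G (ginv G l) k \<longrightarrow>
              ccod H (\<psi>o j) = ccod H (\<phi>o i) \<and> ccod H (\<psi>o l) = ccod H (\<phi>o k) \<and>
              cmp H (ginv H (\<psi>o j)) (\<phi>o i) = cmp H (ginv H (\<psi>o l)) (\<phi>o k))"
proof -
  have "homotopy_condition G H \<phi>o \<psi>o \<longleftrightarrow> (\<exists>Lo La. is_homotopy G H \<phi>o \<phi>a \<psi>o \<psi>a Lo La)"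
  proof
    assume "homotopy_condition G H \<phi>o \<psi>o"
    from is_homotopy_interpolating[OF assms this]
    show "\<exists>Lo La. is_homotopy G H \<phi>o \<phi>a \<psi>o \<psi>a Lo La" by (intro exI)
  next
    assume "\<exists>Lo La. is_homotopy G H \<phi>o \<phi>a \<psi>o \<psi>a Lo La"
    then obtain Lo La where "is_homotopy G H \<phi>o \<phi>a \<psi>o \<psi>a Lo La" by blast
    then have "\<forall>\<sigma>\<in>Stilde_part G. \<exists>\<tau>\<in>Stilde_part H. (\<lambda>(j,i). (\<psi>o j, \<phi>o i)) ` \<sigma> \<subseteq> \<tau>"
      by (intro ballI homotopy_mixed_map_preserves_blocks)
    with assms(1) show "homotopy_condition G H \<phi>o \<psi>o"
      by (rule homotopy_condition_if_mixed_map_preserves_blocks)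
  qed
  then show ?thesis unfolding homotopy_condition_def by simp
qed

end
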